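(* Let $P_1,P_2$ be probability measures on $(\Omega,\mathcal A)$ and $\delta\in(\tfrac12,1)$. If $\bar T(P_1,\delta)=\bar T(P_2,\delta)$, then $P_1=P_2$.
   Context: Let $(\Omega,\mathcal A)$ be a measurable space. For $n\ge1$, $\mathcal A^n$ is the product $\sigma$-algebra on $\Omega^n$; the extended event space is $\bar{\mathcal A}=\bigcup_{n\ge1}\mathcal A^n$, events tagged by their level $n$. For a probability measure $P$ on $\mathcal A$, $P^n$ is its $n$-fold product, $\bar P(A^{(n)})=P^n(A^{(n)})$ for $A^{(n)}\in\mathcal A^n$, and $\bar T(P,\delta)=\{A\in\bar{\mathcal A}:\bar P(A)\ge\delta\}$. *)

theory Defs
  imports "HOL-Probability.Probability"
begin

text \<open>Extended event space: events of level n \<ge> 1, tagged by their level,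
  living in the product sigma-algebra on Omega^n (modelled as functions on {..<n}).\<close>
definition ext_events :: "'a measure \<Rightarrow> (nat \<times> (nat \<Rightarrow> 'a) set) set" where
  "ext_events M = {(n, A). n \<ge> 1 \<and> A \<in> sets (PiM {..<n} (\<lambda>_. M))}"

definition ext_prob :: "'a measure \<Rightarrow> nat \<times> (nat \<Rightarrow> 'a) set \<Rightarrow> real" where
  "ext_prob P E = measure (PiM {..<fst E} (\<lambda>_. P)) (snd E)"

definition T_bar :: "'a measure \<Rightarrow> 'a measure \<Rightarrow> real \<Rightarrow> (nat \<times> (nat \<Rightarrow> 'a) set) set" where
  "T_bar M P \<delta> = {E \<in> ext_events M. ext_prob P E \<ge> \<delta>}"

end

theory Submission imports Defs begin

text \<open>If \<open>P\<^sub>1 A > P\<^sub>2 A\<close> for some event \<open>A\<close>, consider the level-\<open>n\<close> event that at least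
  \<open>n (P\<^sub>1 A + P\<^sub>2 A)/2\<close> of \<open>n\<close> coordinates lie in \<open>A\<close>. By Hoeffding's inequality its
  \<open>P\<^sub>1\<^sup>n\<close>-probability tends to 1 and its \<open>P\<^sub>2\<^sup>n\<close>-probability to 0, so for large \<open>n\<close> it lies in
  \<open>T(P\<^sub>1,\<delta>)\<close> but not in \<open>T(P\<^sub>2,\<delta>)\<close>, for any \<open>0 < \<delta> < 1\<close>.\<close>

definition empirical_count :: "'a set \<Rightarrow> nat \<Rightarrow> (nat \<Rightarrow> 'a) \<Rightarrow> real" where
  "empirical_count A n x = (\<Sum>i<n. indicator A (x i))"

lemma empirical_count_measurable [measurable]:
  assumes "A \<in> sets M"
  shows "empirical_count A n \<in> borel_measurable (PiM {..<n} (\<lambda>_. M))"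
  unfolding empirical_count_def using assms by measurable

lemma indep_vars_coordinates_PiM:
  assumes P: "prob_space P" and I: "finite I" "I \<noteq> {}"
  shows "prob_space.indep_vars (PiM I (\<lambda>_. P)) (\<lambda>_. P) (\<lambda>i x. x i) I"
proof -
  interpret PP: prob_space "PiM I (\<lambda>_. P)" by (intro prob_space_PiM P)
  have "distr (PiM I (\<lambda>_. P)) (\<Pi>\<^sub>M i\<in>I. P) (\<lambda>x. \<lambda>i\<in>I. x i)
      = distr (PiM I (\<lambda>_. P)) (PiM I (\<lambda>_. P)) (\<lambda>x. x)"
    by (intro distr_cong) (auto simp: space_PiM PiE_def extensional_restrict)
  also have "\<dots> = (\<Pi>\<^sub>M i\<in>I. distr (PiM I (\<lambda>_. P)) P (\<lambda>x. x i))"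
    by (simp, intro PiM_cong) (auto simp: distr_PiM_component[OF P] P)
  finally show ?thesis
    by (subst PP.indep_vars_iff_distr_eq_PiM') (use I in auto)
qed

lemma expectation_indicator_coordinate_PiM:
  assumes P: "prob_space P" and A: "A \<in> sets P" and i: "i \<in> I" and I: "finite I"
  shows "prob_space.expectation (PiM I (\<lambda>_. P)) (\<lambda>x. indicator A (x i)) = measure P A"
proof -
  have "integral\<^sup>L (PiM I (\<lambda>_. P)) (\<lambda>x. indicator A (x i) :: real)
      = integral\<^sup>L (distr (PiM I (\<lambda>_. P)) P (\<lambda>x. x i)) (indicator A)"
    using i A by (subst integral_distr) auto
  also have "\<dots> = integral\<^sup>L P (indicator A)"
    using i I by (subst distr_PiM_component) (auto simp: P)
  finally show ?thesis using A by simp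
qed

lemma
  assumes P: "prob_space P" and A: "A \<in> sets P" and n: "n > 0" and \<epsilon>: "\<epsilon> \<ge> 0"
  shows empirical_count_lower_tail:
      "measure (PiM {..<n} (\<lambda>_. P))
         {x \<in> space (PiM {..<n} (\<lambda>_. P)). empirical_count A n x \<le> n * measure P A - \<epsilon>}
       \<le> exp (-2 * \<epsilon>\<^sup>2 / n)"
    and empirical_count_upper_tail:
      "measure (PiM {..<n} (\<lambda>_. P))
         {x \<in> space (PiM {..<n} (\<lambda>_. P)). empirical_count A n x \<ge> n * measure P A + \<epsilon>}
       \<le> exp (-2 * \<epsilon>\<^sup>2 / n)"
proof -
  interpret PP: prob_space "PiM {..<n} (\<lambda>_. P)" by (intro prob_space_PiM P)
  define X where "X = (\<lambda>(i::nat) (x::nat \<Rightarrow> _). indicator A (x i) :: real)"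
  have indep: "PP.indep_vars (\<lambda>_. borel) X {..<n}"
    using PP.indep_vars_compose2[OF indep_vars_coordinates_PiM[OF P, of "{..<n}"],
        of "\<lambda>_. indicator A" "\<lambda>_. borel"] n A
    by (auto simp: X_def lessThan_empty_iff)
  interpret H: Hoeffding_ineq "PiM {..<n} (\<lambda>_. P)" "{..<n}" X "\<lambda>_. 0" "\<lambda>_. 1"
      "\<Sum>i<n. PP.expectation (X i)"
    by unfold_locales (use indep in \<open>auto simp: X_def indicator_def\<close>)
  have mean: "(\<Sum>i<n. PP.expectation (X i)) = n * measure P A"
    using expectation_indicator_coordinate_PiM[OF P A _ finite_lessThan] by (simp add: X_def)
  show "measure (PiM {..<n} (\<lambda>_. P))
         {x \<in> space (PiM {..<n} (\<lambda>_. P)). empirical_count A n x \<le> n * measure P A - \<epsilon>}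
       \<le> exp (-2 * \<epsilon>\<^sup>2 / n)"
    using H.Hoeffding_ineq_le[OF \<epsilon>, unfolded mean] n by (simp add: X_def empirical_count_def)
  show "measure (PiM {..<n} (\<lambda>_. P))
         {x \<in> space (PiM {..<n} (\<lambda>_. P)). empirical_count A n x \<ge> n * measure P A + \<epsilon>}
       \<le> exp (-2 * \<epsilon>\<^sup>2 / n)"
    using H.Hoeffding_ineq_ge[OF \<epsilon>, unfolded mean] n by (simp add: X_def empirical_count_def)
qed

lemma exists_Hoeffding_bound_less:
  fixes t m :: real
  assumes "t > 0" "m > 0"
  shows "\<exists>n::nat>0. exp (-2 * (n * t)\<^sup>2 / n) < m"
proof -
  define n where "n = nat \<lceil>- ln m / (2 * t\<^sup>2)\<rceil> + 1"
  have "real n > - ln m / (2 * t\<^sup>2)" unfolding n_def by linarith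
  then have "-2 * t\<^sup>2 * n < ln m" using assms by (simp add: field_simps)
  then have "exp (-2 * t\<^sup>2 * n) < m" using assms by (metis exp_less_cancel_iff exp_ln)
  moreover have "n > 0" by (simp add: n_def)
  ultimately show ?thesis by (intro exI[of _ n]) (simp add: power2_eq_square field_simps)
qed

lemma exists_product_event_separating:
  fixes M P1 P2 :: "'a measure" and \<delta> :: real
  assumes P1: "prob_space P1" and P2: "prob_space P2"
    and sets1: "sets P1 = sets M" and sets2: "sets P2 = sets M"
    and \<delta>: "0 < \<delta>" "\<delta> < 1"
    and A: "A \<in> sets M" and less: "measure P2 A < measure P1 A"
  shows "\<exists>(n::nat) E. n \<ge> 1 \<and> E \<in> sets (PiM {..<n} (\<lambda>_. M))
           \<and> measure (PiM {..<n} (\<lambda>_. P1)) E \<ge> \<delta> \<and> measure (PiM {..<n} (\<lambda>_. P2)) E < \<delta>"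
proof -
  define p where "p = measure P1 A"
  define q where "q = measure P2 A"
  define t where "t = (p - q) / 2"
  have t: "t > 0" using less by (simp add: t_def p_def q_def)
  obtain n :: nat where n: "n > 0" and small: "exp (-2 * (n * t)\<^sup>2 / n) < min \<delta> (1 - \<delta>)"
    using exists_Hoeffding_bound_less[OF t, of "min \<delta> (1 - \<delta>)"] \<delta> by auto
  let ?Q1 = "PiM {..<n} (\<lambda>_. P1)" and ?Q2 = "PiM {..<n} (\<lambda>_. P2)"
  interpret Q1: prob_space ?Q1 by (intro prob_space_PiM P1)
  have space1: "space ?Q1 = space (PiM {..<n} (\<lambda>_. M))"
    and space2: "space ?Q2 = space (PiM {..<n} (\<lambda>_. M))"
    using sets_eq_imp_space_eq[OF sets1] sets_eq_imp_space_eq[OF sets2] by (simp_all add: space_PiM)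
  have sets_Q1: "sets ?Q1 = sets (PiM {..<n} (\<lambda>_. M))"
    by (intro sets_PiM_cong) (auto simp: sets1)
  define E where "E = {x \<in> space (PiM {..<n} (\<lambda>_. M)). empirical_count A n x \<ge> n * ((p + q) / 2)}"
  have E: "E \<in> sets (PiM {..<n} (\<lambda>_. M))"
    unfolding E_def using A by measurable
  have "E = {x \<in> space ?Q2. empirical_count A n x \<ge> n * q + n * t}"
    unfolding E_def space2 by (simp add: t_def field_simps)
  then have "measure ?Q2 E \<le> exp (-2 * (n * t)\<^sup>2 / n)"
    using empirical_count_upper_tail[OF P2 _ n, of A "n * t"] A sets2 t by (simp add: q_def)
  then have Q2_E: "measure ?Q2 E < \<delta>" using small by linarith
  have compl_E: "space ?Q1 - E \<subseteq> {x \<in> space ?Q1. empirical_count A n x \<le> n * p - n * t}"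
    unfolding E_def space1 by (auto simp: t_def field_simps)
  have "1 - measure ?Q1 E = measure ?Q1 (space ?Q1 - E)"
    using E sets_Q1 by (intro Q1.prob_compl[symmetric]) auto
  also have "\<dots> \<le> measure ?Q1 {x \<in> space ?Q1. empirical_count A n x \<le> n * p - n * t}"
    using A compl_E
    by (intro Q1.finite_measure_mono) (simp_all only: sets_Q1 space1, measurable)
  also have "\<dots> \<le> exp (-2 * (n * t)\<^sup>2 / n)"
    using empirical_count_lower_tail[OF P1 _ n, of A "n * t"] A sets1 t by (simp add: p_def)
  finally have Q1_E: "measure ?Q1 E \<ge> \<delta>" using small by linarith
  show ?thesis
    using n E Q1_E Q2_E by (intro exI[of _ n] exI[of _ E]) (simp add: Suc_le_eq)
qed

lemma T_bar_eq_imp_measure_eq: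
  fixes M P1 P2 :: "'a measure" and \<delta> :: real
  assumes "prob_space P1" "prob_space P2" "sets P1 = sets M" "sets P2 = sets M"
    and "0 < \<delta>" "\<delta> < 1" and "T_bar M P1 \<delta> = T_bar M P2 \<delta>" and "A \<in> sets M"
  shows "measure P1 A = measure P2 A"
proof -
  have not_less: "\<not> measure Q2 A < measure Q1 A"
    if "prob_space Q1" "prob_space Q2" "sets Q1 = sets M" "sets Q2 = sets M"
      and "T_bar M Q1 \<delta> = T_bar M Q2 \<delta>" for Q1 Q2
  proof
    assume "measure Q2 A < measure Q1 A"
    with exists_product_event_separating[OF that(1-4) assms(5,6,8)] obtain n E
      where "(n, E) \<in> T_bar M Q1 \<delta>" "(n, E) \<notin> T_bar M Q2 \<delta>"
      by (force simp: T_bar_def ext_events_def ext_prob_def)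
    with that(5) show False by simp
  qed
  show ?thesis
    using not_less[OF assms(1-4,7)] not_less[OF assms(2,1,4,3) assms(7)[symmetric]] by linarith
qed

theorem mainTheorem8:
  fixes M P1 P2 :: "'a measure" and \<delta> :: real
  assumes "prob_space P1" and "prob_space P2"
    and "sets P1 = sets M" and "sets P2 = sets M"
    and "1/2 < \<delta>" and "\<delta> < 1"
    and "T_bar M P1 \<delta> = T_bar M P2 \<delta>"
  shows "P1 = P2"
proof (rule measure_eqI)
  show "sets P1 = sets P2" using assms by simp
  fix A assume "A \<in> sets P1"
  then have "measure P1 A = measure P2 A"
    using T_bar_eq_imp_measure_eq[OF assms(1-4) _ assms(6,7)] assms(3,5) by simp
  then show "emeasure P1 A = emeasure P2 A"
    using assms(1,2) by (simp add: finite_measure.emeasure_eq_measure prob_space_def)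
qed

end
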